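(* Let $H$ be a real Hilbert space, $f:H\to\mathbb{R}\cup\{+\infty\}$ a proper lower semicontinuous function and $\bar x\in\operatorname{dom}f$ with $0\in\partial_pf(\bar x)$. Suppose that $\operatorname{qri}\big(N_M(\operatorname{gph}\partial_pf,(\bar x,0))\big)\ne\emptyset$ and $$\operatorname{qri}\big(\operatorname{dom}\partial^2_Mf(\bar x,0)\big)\subset-\operatorname{sqri}\big(\operatorname{dom}D^2_Mf(\bar x,0)\big).$$ Then if $f$ satisfies the second-order optimality condition of the second kind at $\bar x$, it satisfies the second-order optimality condition of the third kind at $\bar x$.
   Context: $S_H$ is the unit sphere of $H$; weak convergence is denoted $\stackrel{w}{\to}$. Proximal subdifferential: $\zeta\in\partial_p f(x)$ iff there exist $\sigma,\delta>0$ with $f(y)\ge f(x)+\langle\zeta,y-x\rangle-\frac{\sigma}{2}\|y-x\|^2$ whenever $\|y-x\|<\delta$. Mixed contingent cone: $(h,z)\in T_M(\operatorname{gph}\partial_pf,(\bar x,p))$ iff there exist $t_n\to0^+$, $h_n\to h$ in norm, $z_n\stackrel{w}{\to}z$ with $p+t_nz_n\in\partial_pf(\bar x+t_nh_n)$ for all $n$. $D^2_Mf(\bar x,p)(h):=\{z:(h,z)\in T_M(\operatorname{gph}\partial_pf,(\bar x,p))\}$. $N_M(\operatorname{gph}\partial_pf,(\bar x,p)):=\{(a,b):\langle a,h\rangle+\langle b,z\rangle\le0\ \forall(h,z)\in T_M(\operatorname{gph}\partial_pf,(\bar x,p))\}$; $\partial^2_Mf(\bar x,p)(h):=\{z:(z,-h)\in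 N_M(\operatorname{gph}\partial_pf,(\bar x,p))\}$. For a set-valued map $G$, $\operatorname{dom}G=\{h:G(h)\ne\emptyset\}$. $\operatorname{qri}A:=\{x\in A:\overline{\operatorname{cone}}(A-x)\text{ is a linear subspace}\}$, $\operatorname{sqri}A:=\{x\in A:\operatorname{cone}(A-x)\text{ is a closed linear subspace}\}$. Second kind condition at $\bar x$: $\exists\beta>0$ such that for every $h\in\operatorname{dom}D^2_Mf(\bar x,0)\cap S_H$ there is $z\in D^2_Mf(\bar x,0)(h)$ with $\langle z,h\rangle\ge\beta$. Third kind condition: $\exists\beta>0$ such that $\langle z,h\rangle\ge\beta$ for all $h\in S_H\cap\operatorname{dom}\partial^2_Mf(\bar x,0)$ and all $z\in\partial^2_Mf(\bar x,0)(h)$. *)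

theory Defs
  imports "HOL-Analysis.Analysis"
begin

text \<open>Extended-real valued functions f : H -> R u {+inf}; H is a real Hilbert space,
  i.e. a type of class real_inner and complete_space.\<close>

definition proper_fun :: "('a \<Rightarrow> ereal) \<Rightarrow> bool" where
  "proper_fun f \<longleftrightarrow> (\<forall>x. f x \<noteq> -\<infinity>) \<and> (\<exists>x. f x \<noteq> \<infinity>)"

definition lsc_fun :: "('a::topological_space \<Rightarrow> ereal) \<Rightarrow> bool" where
  "lsc_fun f \<longleftrightarrow> (\<forall>x. f x \<le> Liminf (at x) f)"

definition edom :: "('a \<Rightarrow> ereal) \<Rightarrow> 'a set" where
  "edom f = {x. f x \<noteq> \<infinity>}"

definition prox_subdiff :: "('a::real_inner \<Rightarrow> ereal) \<Rightarrow> 'a \<Rightarrow> 'a set" where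
  "prox_subdiff f x = {\<zeta>. f x \<noteq> \<infinity> \<and> (\<exists>\<sigma>>0. \<exists>\<delta>>0. \<forall>y. norm (y - x) < \<delta> \<longrightarrow>
      f y \<ge> f x + ereal (inner \<zeta> (y - x)) - ereal (\<sigma> / 2 * (norm (y - x))\<^sup>2))}"

definition weak_conv :: "(nat \<Rightarrow> 'a::real_inner) \<Rightarrow> 'a \<Rightarrow> bool" where
  "weak_conv z w \<longleftrightarrow> (\<forall>y. (\<lambda>n. inner (z n) y) \<longlonglongrightarrow> inner w y)"

definition TM :: "('a::real_inner \<Rightarrow> ereal) \<Rightarrow> 'a \<Rightarrow> 'a \<Rightarrow> ('a \<times> 'a) set" where
  "TM f xb p = {(h, z). \<exists>t hs zs. (\<forall>n. t n > 0) \<and> t \<longlonglongrightarrow> 0 \<and> hs \<longlonglongrightarrow> h \<and> weak_conv zs z \<and>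
      (\<forall>n. p + t n *\<^sub>R zs n \<in> prox_subdiff f (xb + t n *\<^sub>R hs n))}"

definition D2M :: "('a::real_inner \<Rightarrow> ereal) \<Rightarrow> 'a \<Rightarrow> 'a \<Rightarrow> 'a \<Rightarrow> 'a set" where
  "D2M f xb p h = {z. (h, z) \<in> TM f xb p}"

definition NM :: "('a::real_inner \<Rightarrow> ereal) \<Rightarrow> 'a \<Rightarrow> 'a \<Rightarrow> ('a \<times> 'a) set" where
  "NM f xb p = {(a, b). \<forall>(h, z) \<in> TM f xb p. inner a h + inner b z \<le> 0}"

definition d2M :: "('a::real_inner \<Rightarrow> ereal) \<Rightarrow> 'a \<Rightarrow> 'a \<Rightarrow> 'a \<Rightarrow> 'a set" where
  "d2M f xb p h = {z. (z, - h) \<in> NM f xb p}"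

definition sv_dom :: "('a \<Rightarrow> 'b set) \<Rightarrow> 'a set" where
  "sv_dom G = {h. G h \<noteq> {}}"

definition cone_of :: "'a::real_vector set \<Rightarrow> 'a set" where
  "cone_of S = {t *\<^sub>R v | t v. t \<ge> 0 \<and> v \<in> S}"

definition qri :: "'a::real_normed_vector set \<Rightarrow> 'a set" where
  "qri A = {x \<in> A. subspace (closure (cone_of ((\<lambda>a. a - x) ` A)))}"

definition sqri :: "'a::real_normed_vector set \<Rightarrow> 'a set" where
  "sqri A = {x \<in> A. closed (cone_of ((\<lambda>a. a - x) ` A)) \<and> subspace (cone_of ((\<lambda>a. a - x) ` A))}"

definition second_kind :: "('a::real_inner \<Rightarrow> ereal) \<Rightarrow> 'a \<Rightarrow> bool" where
  "second_kind f xb \<longleftrightarrow> (\<exists>\<beta>>0. \<forall>h \<in> sv_dom (D2M f xb 0) \<inter> sphere 0 1.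
      \<exists>z \<in> D2M f xb 0 h. inner z h \<ge> \<beta>)"

definition third_kind :: "('a::real_inner \<Rightarrow> ereal) \<Rightarrow> 'a \<Rightarrow> bool" where
  "third_kind f xb \<longleftrightarrow> (\<exists>\<beta>>0. \<forall>h \<in> sphere 0 1 \<inter> sv_dom (d2M f xb 0).
      \<forall>z \<in> d2M f xb 0 h. inner z h \<ge> \<beta>)"

end

theory Submission
  imports Defs
begin

text \<open>By the second kind condition, every \<open>(a, d) \<in> N_M\<close> with \<open>d \<in> dom D\<^sup>2\<^sub>M\<close> satisfies
  \<open>\<langle>a, d\<rangle> \<le> -\<beta> \<parallel>d\<parallel>\<^sup>2\<close>. Given \<open>(z, -h) \<in> N_M\<close>, i.e. \<open>z \<in> \<partial>\<^sup>2\<^sub>M f(xb, 0)(h)\<close>, move it towards a point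
  \<open>(a0, b0) \<in> qri N_M\<close>: since \<open>N_M\<close> and \<open>dom \<partial>\<^sup>2\<^sub>M\<close> are convex cones, \<open>h - l b0\<close> lies in
  \<open>qri (dom \<partial>\<^sup>2\<^sub>M)\<close> for \<open>l > 0\<close>, hence in \<open>-dom D\<^sup>2\<^sub>M\<close> by hypothesis. Applying the estimate to
  \<open>(z + l a0, l b0 - h)\<close> and letting \<open>l \<rightarrow> 0\<close> gives \<open>\<langle>z, h\<rangle> \<ge> \<beta> \<parallel>h\<parallel>\<^sup>2\<close>.\<close>

lemma subspace_closure:
  fixes S :: "'a::real_normed_vector set"
  assumes S: "subspace S"
  shows "subspace (closure S)"
  unfolding subspace_def
proof (intro conjI ballI allI)
  show "0 \<in> closure S"
    using subspace_0[OF S] closure_subset by blast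
next
  fix x y assume "x \<in> closure S" "y \<in> closure S"
  then obtain xs ys where "\<forall>n. xs n \<in> S" "xs \<longlonglongrightarrow> x" "\<forall>n. ys n \<in> S" "ys \<longlonglongrightarrow> y"
    unfolding closure_sequential by blast
  then have "\<forall>n. xs n + ys n \<in> S" "(\<lambda>n. xs n + ys n) \<longlonglongrightarrow> x + y"
    by (simp_all add: S subspace_add tendsto_add)
  then show "x + y \<in> closure S"
    unfolding closure_sequential by (intro exI[of _ "\<lambda>n. xs n + ys n"]) simp
next
  fix c :: real and x assume "x \<in> closure S"
  then obtain xs where "\<forall>n. xs n \<in> S" "xs \<longlonglongrightarrow> x"
    unfolding closure_sequential by blast
  then have "\<forall>n. c *\<^sub>R xs n \<in> S" "(\<lambda>n. c *\<^sub>R xs n) \<longlonglongrightarrow> c *\<^sub>R x"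
    by (simp_all add: S subspace_scale tendsto_scaleR)
  then show "c *\<^sub>R x \<in> closure S"
    unfolding closure_sequential by (intro exI[of _ "\<lambda>n. c *\<^sub>R xs n"]) simp
qed

lemma subset_cone_of: "S \<subseteq> cone_of S"
  unfolding cone_of_def by (force intro: exI[of _ 1])

lemma cone_of_subset_subspace:
  assumes "subspace E" and "S \<subseteq> E"
  shows "cone_of S \<subseteq> E"
  using assms unfolding cone_of_def by (auto intro: subspace_scale)

text \<open>The closed cone generated by \<open>C - x0\<close> is a subspace containing \<open>C\<close> and \<open>-x0\<close>;
  the cone generated by \<open>C - (x + s x0)\<close> lies between the cone generated by \<open>C - x0\<close> and that subspace.\<close>

lemma qri_convex_cone_add_scaleR:
  fixes C :: "'a::real_normed_vector set"
  assumes C: "convex_cone C" and x0: "x0 \<in> qri C" and x: "x \<in> C" and s: "s > 0"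
  shows "x + s *\<^sub>R x0 \<in> qri C"
proof -
  define E where "E = closure (cone_of ((\<lambda>a. a - x0) ` C))"
  define y where "y = x + s *\<^sub>R x0"
  have E: "subspace E" and x0C: "x0 \<in> C"
    using x0 unfolding qri_def E_def by auto
  have cone_sub_E: "cone_of ((\<lambda>a. a - x0) ` C) \<subseteq> E"
    unfolding E_def by (rule closure_subset)
  have C_sub_E: "c \<in> E" if "c \<in> C" for c
  proof -
    have "(c + x0) - x0 \<in> (\<lambda>a. a - x0) ` C"
      using convex_cone_add[OF C that x0C] by blast
    then show ?thesis using cone_sub_E subset_cone_of by fastforce
  qed
  have "0 - x0 \<in> (\<lambda>a. a - x0) ` C"
    using convex_cone_contains_0[OF C] by blast
  then have "- x0 \<in> E" using cone_sub_E subset_cone_of by fastforce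
  then have "x0 \<in> E" using subspace_neg[OF E] by fastforce
  then have "(\<lambda>a. a - y) ` C \<subseteq> E"
    unfolding y_def using E C_sub_E x by (auto intro!: subspace_diff subspace_add subspace_scale)
  then have upper: "closure (cone_of ((\<lambda>a. a - y) ` C)) \<subseteq> E"
    by (intro closure_minimal cone_of_subset_subspace E) (simp_all add: E_def)
  have "cone_of ((\<lambda>a. a - x0) ` C) \<subseteq> cone_of ((\<lambda>a. a - y) ` C)"
  proof
    fix v assume "v \<in> cone_of ((\<lambda>a. a - x0) ` C)"
    then obtain t c where v: "v = t *\<^sub>R (c - x0)" "c \<in> C" "t \<ge> 0"
      unfolding cone_of_def by auto
    have "s *\<^sub>R c + x \<in> C"
      using C s v(2) x by (simp add: convex_cone_add convex_cone_scaleR)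
    moreover have "v = (t / s) *\<^sub>R ((s *\<^sub>R c + x) - y)"
      using s v(1) by (simp add: y_def scaleR_diff_right)
    ultimately show "v \<in> cone_of ((\<lambda>a. a - y) ` C)"
      unfolding cone_of_def using v(3) s by fastforce
  qed
  then have "E \<subseteq> closure (cone_of ((\<lambda>a. a - y) ` C))"
    unfolding E_def by (rule closure_mono)
  with upper E have "subspace (closure (cone_of ((\<lambda>a. a - y) ` C)))"
    by (simp add: subset_antisym)
  moreover have "y \<in> C"
    unfolding y_def using C s x x0C by (simp add: convex_cone_add convex_cone_scaleR)
  ultimately show ?thesis
    unfolding qri_def y_def by simp
qed

lemma qri_bounded_linear_image:
  fixes L :: "'a::real_normed_vector \<Rightarrow> 'b::real_normed_vector"
  assumes L: "bounded_linear L" and x: "x \<in> qri C"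
  shows "L x \<in> qri (L ` C)"
proof -
  interpret bounded_linear L by fact
  define K where "K = cone_of ((\<lambda>a. a - x) ` C)"
  have K: "subspace (closure K)" and xC: "x \<in> C"
    using x unfolding qri_def K_def by auto
  have image_K: "cone_of ((\<lambda>a. a - L x) ` L ` C) = L ` K"
    unfolding K_def cone_of_def by (force simp: diff scaleR)
  have "closure (L ` closure K) = closure (L ` K)"
  proof (rule subset_antisym)
    show "closure (L ` closure K) \<subseteq> closure (L ` K)"
      by (intro closure_minimal closure_bounded_linear_image_subset L closed_closure)
    show "closure (L ` K) \<subseteq> closure (L ` closure K)"
      by (intro closure_mono image_mono closure_subset)
  qed
  moreover have "subspace (L ` closure K)"
    using K linear_axioms linear_subspace_image by blast
  ultimately show ?thesis
    unfolding qri_def using image_K xC subspace_closure by fastforce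
qed

lemma TM_scaleR:
  assumes "(h, z) \<in> TM f xb p" and c: "c > 0"
  shows "(c *\<^sub>R h, c *\<^sub>R z) \<in> TM f xb p"
proof -
  obtain t hs zs where t: "\<forall>n. t n > 0" "t \<longlonglongrightarrow> 0" and hs: "hs \<longlonglongrightarrow> h" and zs: "weak_conv zs z"
    and graph: "\<forall>n. p + t n *\<^sub>R zs n \<in> prox_subdiff f (xb + t n *\<^sub>R hs n)"
    using assms(1) unfolding TM_def by auto
  have "\<forall>n. t n / c > 0" "(\<lambda>n. t n / c) \<longlonglongrightarrow> 0"
    using t c by (simp_all add: tendsto_divide_zero)
  moreover have "(\<lambda>n. c *\<^sub>R hs n) \<longlonglongrightarrow> c *\<^sub>R h"
    using hs by (intro tendsto_intros)
  moreover have "weak_conv (\<lambda>n. c *\<^sub>R zs n) (c *\<^sub>R z)"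
    using zs unfolding weak_conv_def by (auto intro: tendsto_mult_left)
  moreover have "\<forall>n. p + (t n / c) *\<^sub>R (c *\<^sub>R zs n) \<in> prox_subdiff f (xb + (t n / c) *\<^sub>R (c *\<^sub>R hs n))"
    using graph c by simp
  ultimately show ?thesis
    unfolding TM_def mem_Collect_eq prod.case
    by (intro exI[of _ "\<lambda>n. t n / c"] exI[of _ "\<lambda>n. c *\<^sub>R hs n"] exI[of _ "\<lambda>n. c *\<^sub>R zs n"]) simp
qed

lemma NM_eq_Inter_halfspaces: "NM f xb p = (\<Inter>w \<in> TM f xb p. {v. w \<bullet> v \<le> 0})"
  unfolding NM_def by (force simp: inner_commute)

lemma convex_cone_NM: "convex_cone (NM f xb p)"
  unfolding NM_eq_Inter_halfspaces by (auto intro!: convex_cone_Inter convex_cone_halfspace_le)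

lemma sv_dom_d2M_eq: "sv_dom (d2M f xb p) = (\<lambda>w. - snd w) ` NM f xb p"
  unfolding sv_dom_def d2M_def by (force intro: rev_image_eqI)

lemma convex_cone_sv_dom_d2M: "convex_cone (sv_dom (d2M f xb p))"
  unfolding sv_dom_d2M_eq
  by (intro convex_cone_linear_image conjI convex_cone_NM
      bounded_linear.linear[OF bounded_linear_minus[OF bounded_linear_snd]])

lemma qri_sv_dom_d2M:
  assumes "(a, b) \<in> qri (NM f xb p)"
  shows "- b \<in> qri (sv_dom (d2M f xb p))"
  using qri_bounded_linear_image[OF _ assms, of "\<lambda>w. - snd w"]
  by (simp add: sv_dom_d2M_eq bounded_linear_minus bounded_linear_snd)

lemma NM_inner_le_of_second_kind_bound:
  assumes bound: "\<forall>h \<in> sv_dom (D2M f xb p) \<inter> sphere 0 1. \<exists>z \<in> D2M f xb p h. \<beta> \<le> inner z h"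
    and d: "d \<in> sv_dom (D2M f xb p)" and ad: "(a, d) \<in> NM f xb p"
  shows "inner a d \<le> - \<beta> * (norm d)\<^sup>2"
proof (cases "d = 0")
  case False
  define u where "u = (1 / norm d) *\<^sub>R d"
  obtain z where "(d, z) \<in> TM f xb p"
    using d unfolding sv_dom_def D2M_def by auto
  then have "(u, (1 / norm d) *\<^sub>R z) \<in> TM f xb p"
    unfolding u_def using False by (intro TM_scaleR) simp_all
  then have "u \<in> sv_dom (D2M f xb p) \<inter> sphere 0 1"
    using False unfolding sv_dom_def D2M_def u_def by auto
  then obtain z' where z': "(u, z') \<in> TM f xb p" "\<beta> \<le> inner z' u"
    using bound unfolding D2M_def by blast
  have "inner a u + inner d z' \<le> 0"
    using ad z'(1) unfolding NM_def by auto
  then have "norm d * (inner a u + inner d z') \<le> 0"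
    by (simp add: mult_nonneg_nonpos)
  moreover have "norm d * (inner a u + inner d z') = inner a d + (norm d)\<^sup>2 * inner z' u"
    using False unfolding u_def by (simp add: field_simps power2_eq_square inner_commute)
  moreover have "\<beta> * (norm d)\<^sup>2 \<le> (norm d)\<^sup>2 * inner z' u"
    using z'(2) by (simp add: mult.commute mult_right_mono)
  ultimately show ?thesis by linarith
qed simp

lemma sq_norm_le_inner_of_perturbations:
  fixes h z v a :: "'a::real_inner"
  assumes "\<And>l. l > 0 \<Longrightarrow> \<beta> * (norm (h + l *\<^sub>R v))\<^sup>2 \<le> inner (z + l *\<^sub>R a) (h + l *\<^sub>R v)"
  shows "\<beta> * (norm h)\<^sup>2 \<le> inner z h"
proof -
  define g where "g l = inner (z + l *\<^sub>R a) (h + l *\<^sub>R v) - \<beta> * (norm (h + l *\<^sub>R v))\<^sup>2" for l :: real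
  have "(g \<longlongrightarrow> g 0) (at_right 0)"
    unfolding g_def by (intro tendsto_intros)
  moreover have "eventually (\<lambda>l. 0 \<le> g l) (at_right 0)"
    using assms eventually_at_right_less[of "0::real"] unfolding g_def
    by (auto elim: eventually_mono)
  ultimately have "0 \<le> g 0"
    by (intro tendsto_lowerbound) auto
  then show ?thesis
    unfolding g_def by simp
qed

lemma d2M_perturbed_inner_bound:
  assumes bound: "\<forall>h \<in> sv_dom (D2M f xb p) \<inter> sphere 0 1. \<exists>z \<in> D2M f xb p h. \<beta> \<le> inner z h"
    and qri_sub: "qri (sv_dom (d2M f xb p)) \<subseteq> uminus ` sqri (sv_dom (D2M f xb p))"
    and ab0: "(a0, b0) \<in> qri (NM f xb p)"
    and h: "h \<in> sv_dom (d2M f xb p)" and z: "z \<in> d2M f xb p h" and "l > 0"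
  shows "\<beta> * (norm (h + l *\<^sub>R - b0))\<^sup>2 \<le> inner (z + l *\<^sub>R a0) (h + l *\<^sub>R - b0)"
proof -
  have "h + l *\<^sub>R - b0 \<in> qri (sv_dom (d2M f xb p))"
    using qri_convex_cone_add_scaleR[OF convex_cone_sv_dom_d2M qri_sv_dom_d2M[OF ab0] h \<open>l > 0\<close>] .
  then obtain d where "d \<in> sqri (sv_dom (D2M f xb p))" "h + l *\<^sub>R - b0 = - d"
    using qri_sub by blast
  then have d: "d \<in> sv_dom (D2M f xb p)" and hd: "d = - (h + l *\<^sub>R - b0)"
    unfolding sqri_def by auto
  have "(z, - h) \<in> NM f xb p" "(a0, b0) \<in> NM f xb p"
    using z ab0 unfolding d2M_def qri_def by auto
  then have "(z, - h) + l *\<^sub>R (a0, b0) \<in> NM f xb p"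
    using \<open>l > 0\<close> by (intro convex_cone_add convex_cone_scaleR convex_cone_NM) simp_all
  then have "(z + l *\<^sub>R a0, d) \<in> NM f xb p"
    by (simp add: hd)
  from NM_inner_le_of_second_kind_bound[OF bound d this] show ?thesis
    unfolding hd inner_minus_right norm_minus_cancel by linarith
qed

theorem theorem4p2:
  fixes f :: "'a::{real_inner, complete_space} \<Rightarrow> ereal" and xb :: 'a
  assumes "proper_fun f" and "lsc_fun f"
    and "xb \<in> edom f" and "0 \<in> prox_subdiff f xb"
    and "qri (NM f xb 0) \<noteq> {}"
    and "qri (sv_dom (d2M f xb 0)) \<subseteq> uminus ` sqri (sv_dom (D2M f xb 0))"
    and "second_kind f xb"
  shows "third_kind f xb"
proof -
  obtain \<beta> where "\<beta> > 0"
    and bound: "\<forall>h \<in> sv_dom (D2M f xb 0) \<inter> sphere 0 1. \<exists>z \<in> D2M f xb 0 h. \<beta> \<le> inner z h"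
    using assms(7) unfolding second_kind_def by blast
  obtain a0 b0 where ab0: "(a0, b0) \<in> qri (NM f xb 0)"
    using assms(5) by auto
  show ?thesis unfolding third_kind_def
  proof (intro exI[of _ \<beta>] conjI ballI \<open>\<beta> > 0\<close>)
    fix h z assume h: "h \<in> sphere 0 1 \<inter> sv_dom (d2M f xb 0)" and z: "z \<in> d2M f xb 0 h"
    have "\<beta> * (norm h)\<^sup>2 \<le> inner z h"
    proof (rule sq_norm_le_inner_of_perturbations)
      fix l :: real assume "l > 0"
      with h show "\<beta> * (norm (h + l *\<^sub>R - b0))\<^sup>2 \<le> inner (z + l *\<^sub>R a0) (h + l *\<^sub>R - b0)"
        using d2M_perturbed_inner_bound[OF bound assms(6) ab0 _ z] by blast
    qed
    then show "\<beta> \<le> inner z h"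
      using h by simp
  qed
qed

end
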